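(* Let $K,n\in\mathbb{N}^*$ and $\mu\in H^3((0,1),\mathbb{R})$ satisfy (H2)$_{K,n}$. Then there exist at least $n$ indices $j\in\mathbb{N}^*$ with $c_j\neq0$.
   Context: $\varphi_j=\sqrt2\sin(j\pi x)$, $\lambda_j=(j\pi)^2$, $c_j=\langle\mu\varphi_1,\varphi_j\rangle\langle\mu\varphi_K,\varphi_j\rangle$ with $\langle f,g\rangle=\int_0^1f\bar g$. (H2)$_{K,n}$: $\sum_jj^{4n}|c_j|<\infty$ and, with $A^p_K=(-1)^{p-1}\sum_{j}(\lambda_j-\frac{\lambda_1+\lambda_K}2)(\lambda_K-\lambda_j)^{p-1}(\lambda_j-\lambda_1)^{p-1}c_j$, one has $A^p_K=0$ for $1\le p\le n-1$ and $A^n_K\ne0$. *)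

theory Defs
  imports "HOL-Analysis.Analysis"
begin

text \<open>Eigenfunctions and eigenvalues of the Dirichlet Laplacian on (0,1).\<close>
definition phi :: "nat \<Rightarrow> real \<Rightarrow> real" where
  "phi j x = sqrt 2 * sin (real j * pi * x)"

definition lam :: "nat \<Rightarrow> real" where
  "lam j = (real j * pi)\<^sup>2"

definition l2inner :: "(real \<Rightarrow> real) \<Rightarrow> (real \<Rightarrow> real) \<Rightarrow> real" where
  "l2inner f g = (LINT x:{0<..<1}|lborel. f x * g x)"

definition cc :: "(real \<Rightarrow> real) \<Rightarrow> nat \<Rightarrow> nat \<Rightarrow> real" where
  "cc \<mu> K j = l2inner (\<lambda>x. \<mu> x * phi 1 x) (phi j) * l2inner (\<lambda>x. \<mu> x * phi K x) (phi j)"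

definition Acoef :: "(real \<Rightarrow> real) \<Rightarrow> nat \<Rightarrow> nat \<Rightarrow> real" where
  "Acoef \<mu> K p = (-1) ^ (p - 1) *
     (\<Sum>i. let j = Suc i in
        (lam j - (lam 1 + lam K) / 2) * (lam K - lam j) ^ (p - 1) * (lam j - lam 1) ^ (p - 1) * cc \<mu> K j)"

definition H2 :: "(real \<Rightarrow> real) \<Rightarrow> nat \<Rightarrow> nat \<Rightarrow> bool" where
  "H2 \<mu> K n \<longleftrightarrow>
     summable (\<lambda>i. real (Suc i) ^ (4 * n) * \<bar>cc \<mu> K (Suc i)\<bar>) \<and>
     (\<forall>p. 1 \<le> p \<and> p \<le> n - 1 \<longrightarrow> Acoef \<mu> K p = 0) \<and>
     Acoef \<mu> K n \<noteq> 0"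

definition test_fun :: "(real \<Rightarrow> real) \<Rightarrow> bool" where
  "test_fun \<phi> \<longleftrightarrow>
     (\<forall>k. (\<lambda>x. ((deriv ^^ k) \<phi>) x) differentiable_on UNIV) \<and>
     (\<exists>a b. 0 < a \<and> a \<le> b \<and> b < 1 \<and> (\<forall>x. x \<notin> {a..b} \<longrightarrow> \<phi> x = 0))"

definition L2_01 :: "(real \<Rightarrow> real) \<Rightarrow> bool" where
  "L2_01 f \<longleftrightarrow> set_borel_measurable lborel {0<..<1} f \<and>
     set_integrable lborel {0<..<1} (\<lambda>x. (f x)\<^sup>2)"

definition H3_01 :: "(real \<Rightarrow> real) \<Rightarrow> bool" where
  "H3_01 f \<longleftrightarrow> (\<exists>g :: nat \<Rightarrow> real \<Rightarrow> real. g 0 = f \<and> (\<forall>k\<le>3. L2_01 (g k)) \<and>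
     (\<forall>k\<le>3. \<forall>\<phi>. test_fun \<phi> \<longrightarrow>
        (LINT x:{0<..<1}|lborel. f x * (deriv ^^ k) \<phi> x)
          = (-1) ^ k * (LINT x:{0<..<1}|lborel. g k x * \<phi> x)))"

end

theory Submission
  imports Defs "HOL-Computational_Algebra.Polynomial"
begin

text \<open>If fewer than \<open>n\<close> of the \<open>c\<^sub>j\<close> were nonzero, the series \<open>A\<^sup>p\<^sub>K\<close> would be finite
  power sums \<open>\<Sum> w\<^sub>j y\<^sub>j\<^sup>p\<^sup>-\<^sup>1\<close> over fewer than \<open>n\<close> nodes \<open>y\<^sub>j = (\<lambda>\<^sub>j - \<lambda>\<^sub>K)(\<lambda>\<^sub>j - \<lambda>\<^sub>1)\<close>.
  The monic polynomial of degree \<open>n - 1\<close> vanishing at all nodes then expresses \<open>A\<^sup>n\<^sub>K\<close> as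
  a linear combination of \<open>A\<^sup>1\<^sub>K, \<dots>, A\<^sup>n\<^sup>-\<^sup>1\<^sub>K\<close>, which all vanish; so \<open>A\<^sup>n\<^sub>K = 0\<close>,
  contradicting (H2). Neither the \<open>H\<^sup>3\<close> regularity of \<open>\<mu>\<close> nor the summability part of
  (H2) is needed, since in the case being refuted all series are finite sums.\<close>

lemma power_sum_eq_0_if_lower_power_sums_eq_0:
  fixes w y :: "'a \<Rightarrow> 'b :: idom"
  assumes "finite I" and "card I \<le> m"
    and lower: "\<And>k. k < m \<Longrightarrow> (\<Sum>i\<in>I. w i * y i ^ k) = 0"
  shows "(\<Sum>i\<in>I. w i * y i ^ m) = 0"
proof -
  define P where "P = (\<Prod>i\<in>I. [:- y i, 1:])"
  define Q where "Q = monom 1 (m - card I) * P"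
  have lcP: "lead_coeff P = 1"
    by (simp add: P_def lead_coeff_prod)
  have degP: "degree P = card I"
    by (simp add: P_def degree_prod_sum_eq)
  have "P \<noteq> 0"
    using lcP by auto
  hence degQ: "degree Q = m"
    using degP \<open>card I \<le> m\<close> by (simp add: Q_def degree_mult_eq degree_monom_eq)
  have "lead_coeff Q = 1"
    using lcP by (simp add: Q_def lead_coeff_mult lead_coeff_monom degree_monom_eq)
  hence lcQ: "coeff Q m = 1"
    by (simp add: degQ)
  have "poly Q (y i) = 0" if "i \<in> I" for i
    using \<open>finite I\<close> that by (auto simp: Q_def P_def poly_prod)
  hence "0 = (\<Sum>i\<in>I. w i * poly Q (y i))"
    by simp
  also have "\<dots> = (\<Sum>k\<le>m. coeff Q k * (\<Sum>i\<in>I. w i * y i ^ k))"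
    unfolding poly_altdef degQ sum_distrib_left
    by (subst sum.swap) (simp add: mult.left_commute)
  also have "\<dots> = coeff Q m * (\<Sum>i\<in>I. w i * y i ^ m)"
    by (subst sum.mono_neutral_right[of "{..m}" "{m}"]) (auto simp: lower)
  finally show ?thesis using lcQ by simp
qed

lemma suminf_shift_finite_support:
  fixes g :: "nat \<Rightarrow> 'a :: {t2_space, comm_monoid_add}"
  assumes "finite J" and "0 \<notin> J" and "\<And>j. j \<ge> 1 \<Longrightarrow> j \<notin> J \<Longrightarrow> g j = 0"
  shows "(\<Sum>i. g (Suc i)) = sum g J"
proof -
  have J: "J = Suc ` {i. Suc i \<in> J}"
    using \<open>0 \<notin> J\<close> by (auto simp: image_iff) (metis not0_implies_Suc)
  have "finite {i. Suc i \<in> J}"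
    using \<open>finite J\<close> by (metis J finite_imageD inj_Suc inj_on_subset subset_UNIV)
  hence "(\<Sum>i. g (Suc i)) = (\<Sum>i\<in>{i. Suc i \<in> J}. g (Suc i))"
    by (rule suminf_finite) (simp add: assms(3))
  also have "\<dots> = sum g J"
    by (subst J) (simp add: sum.reindex)
  finally show ?thesis .
qed

definition Acoef_weight :: "(real \<Rightarrow> real) \<Rightarrow> nat \<Rightarrow> nat \<Rightarrow> real" where
  "Acoef_weight \<mu> K j = (lam j - (lam 1 + lam K) / 2) * cc \<mu> K j"

definition Acoef_node :: "nat \<Rightarrow> nat \<Rightarrow> real" where
  "Acoef_node K j = (lam j - lam K) * (lam j - lam 1)"

lemma Acoef_eq_power_sum:
  assumes "finite {j. j \<ge> 1 \<and> cc \<mu> K j \<noteq> 0}" (is "finite ?J")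
  shows "Acoef \<mu> K (Suc k) = (\<Sum>j\<in>?J. Acoef_weight \<mu> K j * Acoef_node K j ^ k)"
proof -
  have "Acoef \<mu> K (Suc k) = (-1) ^ k *
      (\<Sum>j\<in>?J. (lam j - (lam 1 + lam K) / 2) * (lam K - lam j) ^ k * (lam j - lam 1) ^ k * cc \<mu> K j)"
    unfolding Acoef_def Let_def diff_Suc_1
    by (subst suminf_shift_finite_support[OF assms]) auto
  also have "\<dots> = (\<Sum>j\<in>?J. Acoef_weight \<mu> K j * Acoef_node K j ^ k)"
    unfolding sum_distrib_left Acoef_weight_def Acoef_node_def
  proof (rule sum.cong)
    fix j
    have "(-1) ^ k * (lam K - lam j) ^ k = (lam j - lam K) ^ k"
      by (simp flip: power_mult_distrib)
    thus "(-1) ^ k * ((lam j - (lam 1 + lam K) / 2) * (lam K - lam j) ^ k * (lam j - lam 1) ^ k * cc \<mu> K j)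
        = (lam j - (lam 1 + lam K) / 2) * cc \<mu> K j * ((lam j - lam K) * (lam j - lam 1)) ^ k"
      by (simp add: power_mult_distrib mult_ac)
  qed simp
  finally show ?thesis .
qed

theorem lemma5p3:
  fixes \<mu> :: "real \<Rightarrow> real" and K n :: nat
  assumes "K \<ge> 1" and "n \<ge> 1"
    and "H3_01 \<mu>"
    and "H2 \<mu> K n"
  shows "\<exists>S. finite S \<and> card S = n \<and> S \<subseteq> {j. j \<ge> 1 \<and> cc \<mu> K j \<noteq> 0}"
proof -
  define J where "J = {j. j \<ge> 1 \<and> cc \<mu> K j \<noteq> 0}"
  have vanish: "Acoef \<mu> K p = 0" if "1 \<le> p" "p \<le> n - 1" for p
    using assms(4) that by (simp add: H2_def)
  have "Acoef \<mu> K n \<noteq> 0"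
    using assms(4) by (simp add: H2_def)
  have "\<not> (finite J \<and> card J < n)"
  proof
    assume J: "finite J \<and> card J < n"
    have moments: "Acoef \<mu> K (Suc k) = (\<Sum>j\<in>J. Acoef_weight \<mu> K j * Acoef_node K j ^ k)" for k
      using J Acoef_eq_power_sum unfolding J_def by blast
    have "Acoef \<mu> K (Suc (n - 1)) = 0"
      unfolding moments
      by (rule power_sum_eq_0_if_lower_power_sums_eq_0)
        (use J in \<open>auto simp flip: moments intro: vanish\<close>)
    thus False
      using \<open>Acoef \<mu> K n \<noteq> 0\<close> \<open>n \<ge> 1\<close> by simp
  qed
  thus ?thesis
    unfolding J_def[symmetric]
    by (meson infinite_arbitrarily_large not_le obtain_subset_with_card_n)
qed

end
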